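(* Let $\Sigma$ be a first-order language and let $\mathcal{T}_\Sigma$ be the family of all complete theories in $\Sigma$ (in the sense described in the context). Then $\mathcal{T}_\Sigma$ is $e$-minimal if and only if either $\Sigma=\emptyset$ or $\Sigma$ consists of exactly one constant symbol.
   Context: Theories are complete consistent first-order theories; structures have nonempty universes. If $\Sigma$ is relational, $\mathcal{T}_\Sigma$ is the family of all complete theories of $\Sigma$-structures. If $\Sigma$ contains function symbols (constants being $0$-ary function symbols), each $n$-ary function symbol $f$ is replaced by an $(n+1)$-ary predicate symbol $R_f$ interpreted as the graph $\{(\bar a,b)\mid f(\bar a)=b\}$, and $\mathcal{T}_\Sigma$ is the family of all complete theories of $\Sigma$-structures viewed in this relational language $\Sigma'$. For a family $\mathcal{T}$ of theories and a sentence $\varphi$ of its language, $\mathcal{T}_\varphi=\{T\in\mathcal{T}\mid \varphi\in T\}$. A family $\mathcal{T}$ is called $e$-minimal if it is infinite and for every sentence $\varphi$ of its language, $\mathcal{T}_\varphi$ is finite or $\mathcal{T}_{\neg\varphi}$ is finite. *)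

theory Defs
  imports Main
begin

text \<open>A signature: relation symbols with arities and function symbols with arities
  (constants = 0-ary function symbols). A symbol s is a relation symbol of arity n iff
  fst Sig s = Some n, and a function symbol of arity n iff snd Sig s = Some n.\<close>
type_synonym 's signature = "('s \<Rightarrow> nat option) \<times> ('s \<Rightarrow> nat option)"

text \<open>Predicate symbols of the relational language Sigma': relation symbols R and
  graph predicates R_f (of arity n+1) for n-ary function symbols f.\<close>
datatype 's sym = Rel 's | FunGraph 's

datatype 'p form = Eq nat nat | Pred 'p "nat list" | Neg "'p form"
  | Conj "'p form" "'p form" | Ex nat "'p form"

fun fv :: "'p form \<Rightarrow> nat set" where
  "fv (Eq x y) = {x, y}"
| "fv (Pred p xs) = set xs"
| "fv (Neg \<phi>) = fv \<phi>"
| "fv (Conj \<phi> \<psi>) = fv \<phi> \<union> fv \<psi>"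
| "fv (Ex x \<phi>) = fv \<phi> - {x}"

fun wf_form :: "'s signature \<Rightarrow> 's sym form \<Rightarrow> bool" where
  "wf_form Sig (Eq x y) = True"
| "wf_form Sig (Pred (Rel r) xs) = (fst Sig r = Some (length xs))"
| "wf_form Sig (Pred (FunGraph f) xs) = (\<exists>n. snd Sig f = Some n \<and> length xs = Suc n)"
| "wf_form Sig (Neg \<phi>) = wf_form Sig \<phi>"
| "wf_form Sig (Conj \<phi> \<psi>) = (wf_form Sig \<phi> \<and> wf_form Sig \<psi>)"
| "wf_form Sig (Ex x \<phi>) = wf_form Sig \<phi>"

definition sentence :: "'s signature \<Rightarrow> 's sym form \<Rightarrow> bool" where
  "sentence Sig \<phi> \<longleftrightarrow> wf_form Sig \<phi> \<and> fv \<phi> = {}"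

fun sat :: "'u set \<Rightarrow> ('s \<Rightarrow> 'u list \<Rightarrow> bool) \<Rightarrow> ('s \<Rightarrow> 'u list \<Rightarrow> 'u)
             \<Rightarrow> (nat \<Rightarrow> 'u) \<Rightarrow> 's sym form \<Rightarrow> bool" where
  "sat U I F v (Eq x y) = (v x = v y)"
| "sat U I F v (Pred (Rel r) xs) = I r (map v xs)"
| "sat U I F v (Pred (FunGraph f) xs) =
     (xs \<noteq> [] \<and> F f (map v (butlast xs)) = v (last xs))"
| "sat U I F v (Neg \<phi>) = (\<not> sat U I F v \<phi>)"
| "sat U I F v (Conj \<phi> \<psi>) = (sat U I F v \<phi> \<and> sat U I F v \<psi>)"
| "sat U I F v (Ex x \<phi>) = (\<exists>a\<in>U. sat U I F (v(x := a)) \<phi>)"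

definition is_structure :: "'s signature \<Rightarrow> 'u set \<Rightarrow> ('s \<Rightarrow> 'u list \<Rightarrow> 'u) \<Rightarrow> bool" where
  "is_structure Sig U F \<longleftrightarrow> U \<noteq> {} \<and>
     (\<forall>f n xs. snd Sig f = Some n \<longrightarrow> length xs = n \<longrightarrow> set xs \<subseteq> U \<longrightarrow> F f xs \<in> U)"

definition Th :: "'s signature \<Rightarrow> 'u set \<Rightarrow> ('s \<Rightarrow> 'u list \<Rightarrow> bool) \<Rightarrow> ('s \<Rightarrow> 'u list \<Rightarrow> 'u)
                  \<Rightarrow> 's sym form set" where
  "Th Sig U I F = {\<phi>. sentence Sig \<phi> \<and> (\<forall>v. (\<forall>n. v n \<in> U) \<longrightarrow> sat U I F v \<phi>)}"

text \<open>Universes are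
  taken inside the type 's + nat, whose cardinality is |'s| + aleph_0 \<ge> |Sig| + aleph_0;
  by downward Loewenheim-Skolem every complete theory of a Sig-structure is realised
  by such a structure, so this is the family of all complete Sig-theories.\<close>
definition complete_theories :: "'s signature \<Rightarrow> 's sym form set set" where
  "complete_theories Sig =
     {Th Sig U I F | (U :: ('s + nat) set) I F. is_structure Sig U F}"

definition theories_with :: "'p form set set \<Rightarrow> 'p form \<Rightarrow> 'p form set set" where
  "theories_with \<T> \<phi> = {T \<in> \<T>. \<phi> \<in> T}"

definition e_minimal :: "'s signature \<Rightarrow> 's sym form set set \<Rightarrow> bool" where
  "e_minimal Sig \<T> \<longleftrightarrow> infinite \<T> \<and>
     (\<forall>\<phi>. sentence Sig \<phi> \<longrightarrow>
        finite (theories_with \<T> \<phi>) \<or> finite (theories_with \<T> (Neg \<phi>)))"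

definition empty_signature :: "'s signature \<Rightarrow> bool" where
  "empty_signature Sig \<longleftrightarrow> fst Sig = (\<lambda>_. None) \<and> snd Sig = (\<lambda>_. None)"

definition single_constant_signature :: "'s signature \<Rightarrow> bool" where
  "single_constant_signature Sig \<longleftrightarrow>
     fst Sig = (\<lambda>_. None) \<and> (\<exists>c. snd Sig = (\<lambda>_. None)(c := Some 0))"

end

theory Submission
  imports Defs
begin

text \<open>If the signature has no relation symbols and at most one constant, a structure is
  a bare set with possibly one named point, and an Ehrenfeucht-Fraisse argument shows that a
  sentence of quantifier rank \<open>q\<close> has the same truth value in all structures with at least
  \<open>q + 1\<close> elements, while structures of equal finite size are elementarily equivalent. So for
  each sentence either it or its negation holds only in structures of size \<open>\<le> q\<close>, which have
  only finitely many theories. Conversely, a relation symbol, a function symbol of positive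
  arity, or two constants give a sentence \<open>\<phi>\<close> such that both \<open>\<phi>\<close> and \<open>\<not>\<phi>\<close> have models
  of every finite size \<open>\<ge> 2\<close>; since finite models of different sizes are separated by the
  sentences "there are at least \<open>k\<close> elements", both \<open>\<phi>\<close> and \<open>\<not>\<phi>\<close> lie in infinitely many
  complete theories.\<close>

section \<open>The back-and-forth argument for at most one constant\<close>

fun quantifier_rank :: "'p form \<Rightarrow> nat" where
  "quantifier_rank (Eq x y) = 0"
| "quantifier_rank (Pred p xs) = 0"
| "quantifier_rank (Neg \<phi>) = quantifier_rank \<phi>"
| "quantifier_rank (Conj \<phi> \<psi>) = max (quantifier_rank \<phi>) (quantifier_rank \<psi>)"
| "quantifier_rank (Ex x \<phi>) = Suc (quantifier_rank \<phi>)"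

definition at_most_constant :: "'s signature \<Rightarrow> 's \<Rightarrow> bool" where
  "at_most_constant Sig c \<longleftrightarrow>
     fst Sig = (\<lambda>_. None) \<and> (\<forall>f n. snd Sig f = Some n \<longrightarrow> f = c \<and> n = 0)"

definition card_at_least :: "nat \<Rightarrow> 'u set \<Rightarrow> bool" where
  "card_at_least n U \<longleftrightarrow> infinite U \<or> n \<le> card U"

definition similar_card :: "nat \<Rightarrow> 'u set \<Rightarrow> 'v set \<Rightarrow> bool" where
  "similar_card n U U' \<longleftrightarrow>
     (card_at_least n U \<and> card_at_least n U') \<or> (finite U \<and> finite U' \<and> card U = card U')"

lemma similar_card_mono: "similar_card n U U' \<Longrightarrow> m \<le> n \<Longrightarrow> similar_card m U U'"
  unfolding similar_card_def card_at_least_def by auto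

lemma similar_card_sym: "similar_card n U U' \<Longrightarrow> similar_card n U' U"
  unfolding similar_card_def by auto

text \<open>The map \<open>v y \<mapsto> v' y\<close> for \<open>y \<in> X\<close>, \<open>a \<mapsto> a'\<close> is well defined and injective;
  when \<open>a\<close>, \<open>a'\<close> interpret the constant it is a partial isomorphism.\<close>
definition same_eq_type :: "nat set \<Rightarrow> (nat \<Rightarrow> 'u) \<Rightarrow> 'u \<Rightarrow> (nat \<Rightarrow> 'v) \<Rightarrow> 'v \<Rightarrow> bool" where
  "same_eq_type X v a v' a' \<longleftrightarrow>
     (\<forall>y\<in>X. \<forall>z\<in>X. v y = v z \<longleftrightarrow> v' y = v' z) \<and> (\<forall>y\<in>X. v y = a \<longleftrightarrow> v' y = a')"

lemma same_eq_type_sym: "same_eq_type X v a v' a' \<Longrightarrow> same_eq_type X v' a' v a"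
  unfolding same_eq_type_def by auto

lemma same_eq_type_mono: "same_eq_type X v a v' a' \<Longrightarrow> Y \<subseteq> X \<Longrightarrow> same_eq_type Y v a v' a'"
  unfolding same_eq_type_def by blast

lemma same_eq_type_insert:
  assumes "x \<notin> Y"
  shows "same_eq_type (insert x Y) (v(x := b)) a (v'(x := b')) a' \<longleftrightarrow>
    same_eq_type Y v a v' a' \<and> (\<forall>y\<in>Y. v y = b \<longleftrightarrow> v' y = b') \<and> (b = a \<longleftrightarrow> b' = a')"
  using assms unfolding same_eq_type_def by (auto split: if_splits)

lemma card_insert_image_eq_if_same_eq_type:
  assumes "finite X" "same_eq_type X v a v' a'"
  shows "card (insert a (v ` X)) = card (insert a' (v' ` X))"
proof -
  define P where "P = insert (a, a') ((\<lambda>y. (v y, v' y)) ` X)"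
  have "inj_on fst P" "inj_on snd P"
    using assms(2) unfolding P_def same_eq_type_def inj_on_def by auto
  moreover have "fst ` P = insert a (v ` X)" "snd ` P = insert a' (v' ` X)"
    unfolding P_def by force+
  ultimately show ?thesis by (metis card_image)
qed

lemma ex_fresh_if_similar_card:
  assumes fin: "finite Y" and eqt: "same_eq_type Y v a v' a'"
    and fresh: "insert a (v ` Y) \<subset> U" and sim: "similar_card (card Y + 2) U U'"
  shows "\<exists>b'\<in>U'. b' \<notin> insert a' (v' ` Y)"
proof (rule ccontr)
  assume "\<not> ?thesis"
  then have sub: "U' \<subseteq> insert a' (v' ` Y)" by blast
  have "card U' \<le> card (insert a' (v' ` Y))"
    using sub fin by (simp add: card_mono)
  also have "\<dots> = card (insert a (v ` Y))"
    using card_insert_image_eq_if_same_eq_type[OF fin eqt] by simp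
  finally have le: "card U' \<le> card (insert a (v ` Y))" .
  from sim consider "infinite U' \<or> card Y + 2 \<le> card U'" | "finite U" "card U = card U'"
    unfolding similar_card_def card_at_least_def by blast
  then show False
  proof cases
    case 1
    moreover have "finite U'" using sub fin finite_subset by blast
    moreover have "card (insert a (v ` Y)) \<le> card Y + 1"
      using fin card_image_le[of Y v] card_insert_le_m1 by (simp add: card_insert_if)
    ultimately show False using le by linarith
  next
    case 2
    then have "card (insert a (v ` Y)) < card U" using fresh psubset_card_mono by blast
    then show False using le \<open>card U = card U'\<close> by linarith
  qed
qed

text \<open>An old element is answered by the corresponding old element, a new one by a new one.\<close>
lemma same_eq_type_extend:
  assumes fin: "finite X" and eqt: "same_eq_type X v a v' a'"
    and U: "v ` X \<subseteq> U" "a \<in> U" "b \<in> U" and U': "v' ` X \<subseteq> U'" "a' \<in> U'"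
    and sim: "similar_card (card X + 2) U U'"
  shows "\<exists>b'\<in>U'. same_eq_type (insert x X) (v(x := b)) a (v'(x := b')) a'"
proof -
  define Y where "Y = X - {x}"
  have Y: "finite Y" "Y \<subseteq> X" "x \<notin> Y" "insert x X = insert x Y"
    using fin unfolding Y_def by auto
  have eqtY: "same_eq_type Y v a v' a'"
    using eqt Y(2) by (rule same_eq_type_mono)
  have "\<exists>b'\<in>U'. (\<forall>y\<in>Y. v y = b \<longleftrightarrow> v' y = b') \<and> (b = a \<longleftrightarrow> b' = a')"
  proof -
    consider (old) y where "y \<in> Y" "v y = b" | (const) "b = a" | (new) "b \<notin> insert a (v ` Y)"
      by blast
    then show ?thesis
    proof cases
      case old
      then have "v' y \<in> U'" using U' Y(2) by blast
      moreover have "(\<forall>z\<in>Y. v z = b \<longleftrightarrow> v' z = v' y) \<and> (b = a \<longleftrightarrow> v' y = a')"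
        using eqtY old unfolding same_eq_type_def by metis
      ultimately show ?thesis by blast
    next
      case const
      then show ?thesis using eqtY U'(2) unfolding same_eq_type_def by blast
    next
      case new
      have "insert a (v ` Y) \<subset> U" using U Y(2) new by auto
      moreover have "card Y \<le> card X" using fin Y(2) by (rule card_mono)
      then have "similar_card (card Y + 2) U U'" by (intro similar_card_mono[OF sim]) simp
      ultimately obtain b' where "b' \<in> U'" "b' \<notin> insert a' (v' ` Y)"
        using ex_fresh_if_similar_card[OF Y(1) eqtY] by metis
      then show ?thesis using new by (intro bexI[of _ b']) auto
    qed
  qed
  then obtain b' where b': "b' \<in> U'" "\<forall>y\<in>Y. v y = b \<longleftrightarrow> v' y = b'" "b = a \<longleftrightarrow> b' = a'"
    by blast
  then have "same_eq_type (insert x Y) (v(x := b)) a (v'(x := b')) a'"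
    unfolding same_eq_type_insert[OF Y(3)] using eqtY b'(2,3) by blast
  with b'(1) show ?thesis unfolding Y(4) by blast
qed

lemma at_most_constantD:
  assumes "at_most_constant Sig c"
  shows "fst Sig r = None" and "snd Sig f = Some n \<Longrightarrow> f = c \<and> n = 0"
  using assms unfolding at_most_constant_def by (metis, blast)

lemma sat_Pred_iff_if_same_eq_type:
  assumes Sig: "at_most_constant Sig c"
    and const: "snd Sig c = Some 0 \<longrightarrow> F c [] = a \<and> F' c [] = a'"
    and wf: "wf_form Sig (Pred p xs)" and fv: "set xs \<subseteq> X" and eqt: "same_eq_type X v a v' a'"
  shows "sat U I F v (Pred p xs) \<longleftrightarrow> sat U' I' F' v' (Pred p xs)"
proof (cases p)
  case (Rel r)
  then show ?thesis using wf at_most_constantD(1)[OF Sig] by simp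
next
  case (FunGraph f)
  from wf obtain n where n: "snd Sig f = Some n" "length xs = Suc n"
    unfolding FunGraph by auto
  from at_most_constantD(2)[OF Sig n(1)] have "f = c" "n = 0" by auto
  with n(2) obtain x where xs: "xs = [x]" by (auto simp: length_Suc_conv)
  with fv have "x \<in> X" by simp
  with eqt have "v x = a \<longleftrightarrow> v' x = a'" unfolding same_eq_type_def by blast
  moreover have "F c [] = a" "F' c [] = a'" using const n(1) \<open>f = c\<close> \<open>n = 0\<close> by simp_all
  then have "sat U I F v (Pred p xs) \<longleftrightarrow> a = v x" "sat U' I' F' v' (Pred p xs) \<longleftrightarrow> a' = v' x"
    by (simp_all add: FunGraph xs \<open>f = c\<close>)
  ultimately show ?thesis by blast
qed

text \<open>The size bound drops by one per quantifier and still leaves, in each round, room for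
  an element outside the at most \<open>card X + 1\<close> named ones.\<close>
lemma sat_iff_if_same_eq_type:
  assumes Sig: "at_most_constant Sig c"
    and const: "snd Sig c = Some 0 \<longrightarrow> F c [] = a \<and> F' c [] = a'"
    and a: "a \<in> U" "a' \<in> U'"
  shows "wf_form Sig \<phi> \<Longrightarrow> finite X \<Longrightarrow> fv \<phi> \<subseteq> X \<Longrightarrow> v ` X \<subseteq> U \<Longrightarrow> v' ` X \<subseteq> U' \<Longrightarrow>
    same_eq_type X v a v' a' \<Longrightarrow> similar_card (card X + 1 + quantifier_rank \<phi>) U U' \<Longrightarrow>
    sat U I F v \<phi> \<longleftrightarrow> sat U' I' F' v' \<phi>"
proof (induction \<phi> arbitrary: X v v')
  case (Eq x y)
  then have "x \<in> X" "y \<in> X" by auto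
  with Eq.prems(6) have "v x = v y \<longleftrightarrow> v' x = v' y" unfolding same_eq_type_def by blast
  then show ?case by simp
next
  case (Pred p xs)
  then show ?case using sat_Pred_iff_if_same_eq_type[where F = F and F' = F', OF Sig const] by simp
next
  case (Neg \<phi>)
  have "sat U I F v \<phi> \<longleftrightarrow> sat U' I' F' v' \<phi>"
    by (rule Neg.IH) (use Neg.prems in simp_all)
  then show ?case by simp
next
  case (Conj \<phi> \<psi>)
  have "sat U I F v \<phi> \<longleftrightarrow> sat U' I' F' v' \<phi>"
    by (rule Conj.IH(1)) (use Conj.prems in \<open>auto elim: similar_card_mono\<close>)
  moreover have "sat U I F v \<psi> \<longleftrightarrow> sat U' I' F' v' \<psi>"
    by (rule Conj.IH(2)) (use Conj.prems in \<open>auto elim: similar_card_mono\<close>)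
  ultimately show ?case by simp
next
  case (Ex x \<phi>)
  have sim_ext: "similar_card (card X + 2) U U'"
    using Ex.prems(7) by (rule similar_card_mono) simp
  have "card (insert x X) \<le> card X + 1"
    using Ex.prems(2) by (simp add: card_insert_if)
  then have sim_IH: "similar_card (card (insert x X) + 1 + quantifier_rank \<phi>) U U'"
    using Ex.prems(7) by (auto elim: similar_card_mono)
  have IH: "sat U I F (v(x := b)) \<phi> \<longleftrightarrow> sat U' I' F' (v'(x := b')) \<phi>"
    if "b \<in> U" "b' \<in> U'" "same_eq_type (insert x X) (v(x := b)) a (v'(x := b')) a'" for b b'
  proof (rule Ex.IH[OF _ _ _ _ _ that(3) sim_IH])
    show "wf_form Sig \<phi>" "finite (insert x X)" "fv \<phi> \<subseteq> insert x X"
      using Ex.prems(1-3) by auto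
    show "(v(x := b)) ` insert x X \<subseteq> U" "(v'(x := b')) ` insert x X \<subseteq> U'"
      using Ex.prems(4,5) that(1,2) by auto
  qed
  have answer_right: "\<exists>b'\<in>U'. same_eq_type (insert x X) (v(x := b)) a (v'(x := b')) a'" if "b \<in> U" for b
    using same_eq_type_extend[OF Ex.prems(2,6,4) a(1) that Ex.prems(5) a(2) sim_ext] .
  have answer_left: "\<exists>b\<in>U. same_eq_type (insert x X) (v(x := b)) a (v'(x := b')) a'" if "b' \<in> U'" for b'
    using same_eq_type_extend[where x = x, OF Ex.prems(2) same_eq_type_sym[OF Ex.prems(6)] Ex.prems(5) a(2)
        that Ex.prems(4) a(1) similar_card_sym[OF sim_ext]] by (metis same_eq_type_sym)
  show ?case
  proof
    assume "sat U I F v (Ex x \<phi>)"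
    then obtain b where "b \<in> U" "sat U I F (v(x := b)) \<phi>" by auto
    moreover from answer_right[OF this(1)] obtain b' where
      "b' \<in> U'" "same_eq_type (insert x X) (v(x := b)) a (v'(x := b')) a'" by blast
    ultimately show "sat U' I' F' v' (Ex x \<phi>)" using IH by auto
  next
    assume "sat U' I' F' v' (Ex x \<phi>)"
    then obtain b' where "b' \<in> U'" "sat U' I' F' (v'(x := b')) \<phi>" by auto
    moreover from answer_left[OF this(1)] obtain b where
      "b \<in> U" "same_eq_type (insert x X) (v(x := b)) a (v'(x := b')) a'" by blast
    ultimately show "sat U I F v (Ex x \<phi>)" using IH by auto
  qed
qed

section \<open>Counting sentences and infinitely many theories\<close>

fun distinct_from :: "nat \<Rightarrow> nat \<Rightarrow> 'p form" where
  "distinct_from m 0 = Eq m m"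
| "distinct_from m (Suc j) = Conj (distinct_from m j) (Neg (Eq m j))"

text \<open>There are \<open>k\<close> elements distinct from the values of \<open>x\<^sub>0, \<dots>, x\<^bsub>m-1\<^esub>\<close>; they are
  bound to \<open>x\<^sub>m, \<dots>, x\<^bsub>m+k-1\<^esub>\<close>. The base case is the closed sentence \<open>\<forall>x\<^sub>m. x\<^sub>m = x\<^sub>m\<close>.\<close>
fun at_least_from :: "nat \<Rightarrow> nat \<Rightarrow> 'p form" where
  "at_least_from m 0 = Neg (Ex m (Neg (Eq m m)))"
| "at_least_from m (Suc k) = Ex m (Conj (distinct_from m m) (at_least_from (Suc m) k))"

abbreviation at_least :: "nat \<Rightarrow> 'p form" where
  "at_least k \<equiv> at_least_from 0 k"

lemma sat_distinct_from: "sat U I F v (distinct_from m j) \<longleftrightarrow> (\<forall>i<j. v m \<noteq> v i)"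
  by (induction j) (auto simp: less_Suc_eq)

lemma ex_subset_card_Suc_iff:
  "(\<exists>S \<subseteq> U - A. finite S \<and> card S = Suc k) \<longleftrightarrow>
   (\<exists>b\<in>U - A. \<exists>S \<subseteq> U - insert b A. finite S \<and> card S = k)"
proof
  assume "\<exists>S \<subseteq> U - A. finite S \<and> card S = Suc k"
  then obtain S where S: "S \<subseteq> U - A" "finite S" "card S = Suc k" by blast
  then obtain b where "b \<in> S" by fastforce
  with S show "\<exists>b\<in>U - A. \<exists>S \<subseteq> U - insert b A. finite S \<and> card S = k"
    by (intro bexI[of _ b] exI[of _ "S - {b}"]) auto
next
  assume "\<exists>b\<in>U - A. \<exists>S \<subseteq> U - insert b A. finite S \<and> card S = k"
  then obtain b S where "b \<in> U - A" "S \<subseteq> U - insert b A" "finite S" "card S = k" by blast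
  moreover from this have "b \<notin> S" by blast
  ultimately show "\<exists>S \<subseteq> U - A. finite S \<and> card S = Suc k"
    by (intro exI[of _ "insert b S"]) auto
qed

lemma sat_at_least_from:
  "sat U I F v (at_least_from m k) \<longleftrightarrow> (\<exists>S \<subseteq> U - v ` {..<m}. finite S \<and> card S = k)"
proof (induction k arbitrary: m v)
  case 0
  have "\<exists>S \<subseteq> U - v ` {..<m}. finite S \<and> card S = 0" by (intro exI[of _ "{}"]) simp
  then show ?case by simp
next
  case (Suc k)
  have image_upd: "(v(m := b)) ` {..<Suc m} = insert b (v ` {..<m})" for b
    by (auto simp: lessThan_Suc)
  have "sat U I F v (at_least_from m (Suc k)) \<longleftrightarrow>
      (\<exists>b\<in>U. (\<forall>i<m. b \<noteq> v i) \<and> sat U I F (v(m := b)) (at_least_from (Suc m) k))"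
    by (simp add: sat_distinct_from)
  also have "\<dots> \<longleftrightarrow> (\<exists>b\<in>U - v ` {..<m}. \<exists>S \<subseteq> U - insert b (v ` {..<m}). finite S \<and> card S = k)"
    unfolding Suc image_upd by blast
  also have "\<dots> \<longleftrightarrow> (\<exists>S \<subseteq> U - v ` {..<m}. finite S \<and> card S = Suc k)"
    by (rule ex_subset_card_Suc_iff[symmetric])
  finally show ?case .
qed

lemma fv_distinct_from: "fv (distinct_from m j) \<subseteq> insert m {..<j}"
  by (induction j) auto

lemma fv_at_least_from: "fv (at_least_from m k) \<subseteq> {..<m}"
proof (induction k arbitrary: m)
  case (Suc k)
  then show ?case using fv_distinct_from[of m m] by fastforce
qed simp

lemma sentence_at_least: "sentence Sig (at_least k)"
proof -
  have "wf_form Sig (distinct_from m j)" for m j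
    by (induction j) auto
  then have "wf_form Sig (at_least_from m k)" for m
    by (induction k arbitrary: m) auto
  then show ?thesis using fv_at_least_from[of 0 k] unfolding sentence_def by auto
qed

lemma valuation_exists:
  assumes "U \<noteq> {}"
  shows "\<exists>v. \<forall>n::nat. v n \<in> U"
proof -
  obtain u where "u \<in> U" using assms by blast
  then show ?thesis by (intro exI[of _ "\<lambda>_. u"]) simp
qed

lemma at_least_in_Th_iff:
  assumes "finite U" "U \<noteq> {}"
  shows "at_least k \<in> Th Sig U I F \<longleftrightarrow> k \<le> card U"
proof -
  have "(\<exists>S \<subseteq> U. finite S \<and> card S = k) \<longleftrightarrow> k \<le> card U"
  proof
    show "k \<le> card U" if "\<exists>S \<subseteq> U. finite S \<and> card S = k"
      using that assms(1) card_mono by blast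
    show "\<exists>S \<subseteq> U. finite S \<and> card S = k" if "k \<le> card U"
      using obtain_subset_with_card_n[OF that] by metis
  qed
  then have "sat U I F v (at_least k) \<longleftrightarrow> k \<le> card U" for v
    by (simp add: sat_at_least_from)
  then show ?thesis
    using sentence_at_least[of Sig k] valuation_exists[OF assms(2)] unfolding Th_def by auto
qed

lemma card_eq_if_Th_eq:
  assumes "finite U" "U \<noteq> {}" "finite U'" "U' \<noteq> {}" "Th Sig U I F = Th Sig U' I' F'"
  shows "card U = card U'"
proof -
  have "k \<le> card U \<longleftrightarrow> k \<le> card U'" for k
    using at_least_in_Th_iff[OF assms(1,2)] at_least_in_Th_iff[OF assms(3,4)] assms(5) by metis
  then show ?thesis by (meson le_antisym order_refl)
qed

lemma Neg_notin_Th: "U \<noteq> {} \<Longrightarrow> \<phi> \<in> Th Sig U I F \<Longrightarrow> Neg \<phi> \<notin> Th Sig U I F"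
  unfolding Th_def by auto

definition has_model_of_card :: "'s signature \<Rightarrow> nat \<Rightarrow> 's sym form \<Rightarrow> bool" where
  "has_model_of_card Sig m \<phi> \<longleftrightarrow>
     (\<exists>(U :: ('s + nat) set) I F. is_structure Sig U F \<and> finite U \<and> card U = m \<and> \<phi> \<in> Th Sig U I F)"

lemma is_structure_const: "u \<in> U \<Longrightarrow> is_structure Sig U (\<lambda>_ _. u)"
  unfolding is_structure_def by blast

lemma has_model_of_card_InrI:
  fixes Sig :: "'s signature"
  assumes "is_structure Sig (Inr ` {..<m} :: ('s + nat) set) F" "\<phi> \<in> Th Sig (Inr ` {..<m}) I F"
  shows "has_model_of_card Sig m \<phi>"
  unfolding has_model_of_card_def using assms by (intro exI[of _ "Inr ` {..<m}"]) (auto simp: card_image)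

lemma infinite_theories_with:
  fixes Sig :: "'s signature"
  assumes "infinite {m. has_model_of_card Sig m \<phi>}"
  shows "infinite (theories_with (complete_theories Sig) \<phi>)"
proof
  let ?M = "{m. has_model_of_card Sig m \<phi>}"
  have "\<forall>m\<in>?M. \<exists>(U :: ('s + nat) set) I F. is_structure Sig U F \<and> finite U \<and> card U = m \<and> \<phi> \<in> Th Sig U I F"
    unfolding has_model_of_card_def by blast
  then obtain U :: "nat \<Rightarrow> ('s + nat) set" and I F where model: "\<forall>m\<in>?M.
      is_structure Sig (U m) (F m) \<and> finite (U m) \<and> card (U m) = m \<and> \<phi> \<in> Th Sig (U m) (I m) (F m)"
    by metis
  let ?th = "\<lambda>m. Th Sig (U m) (I m) (F m)"
  have "inj_on ?th ?M"
  proof (rule inj_onI)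
    fix m m' assume "m \<in> ?M" "m' \<in> ?M" "?th m = ?th m'"
    moreover from this have "U m \<noteq> {}" "U m' \<noteq> {}"
      using model unfolding is_structure_def by blast+
    ultimately show "m = m'" using model card_eq_if_Th_eq by metis
  qed
  then have "infinite (?th ` ?M)" using assms finite_imageD by blast
  moreover have "?th ` ?M \<subseteq> theories_with (complete_theories Sig) \<phi>"
    using model unfolding theories_with_def complete_theories_def by blast
  moreover assume "finite (theories_with (complete_theories Sig) \<phi>)"
  ultimately show False using finite_subset by blast
qed

lemma theories_with_subset: "theories_with \<T> \<phi> \<subseteq> \<T>"
  unfolding theories_with_def by blast

lemma infinite_complete_theories:
  fixes Sig :: "'s signature"
  shows "infinite (complete_theories Sig)"
proof -
  let ?\<phi> = "Ex 0 (Eq 0 0) :: 's sym form"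
  have "has_model_of_card Sig m ?\<phi>" if "m \<ge> 1" for m
    using that
    by (intro has_model_of_card_InrI[where F = "\<lambda>_ _. Inr 0" and I = "\<lambda>_ _. False"] is_structure_const)
      (auto simp: Th_def sentence_def)
  then have "{1..} \<subseteq> {m. has_model_of_card Sig m ?\<phi>}" by auto
  then have "infinite {m. has_model_of_card Sig m ?\<phi>}"
    using infinite_Ici infinite_super by blast
  then have "infinite (theories_with (complete_theories Sig) ?\<phi>)"
    by (rule infinite_theories_with)
  then show ?thesis using theories_with_subset infinite_super by blast
qed

section \<open>Signatures with at most one constant are e-minimal\<close>

lemma constant_in_universe:
  assumes "is_structure Sig U F"
  shows "\<exists>a\<in>U. snd Sig c = Some 0 \<longrightarrow> F c [] = a"
proof (cases "snd Sig c = Some 0")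
  case True
  then have "F c [] \<in> U"
    using assms unfolding is_structure_def by (metis empty_subsetI list.set(1) list.size(3))
  then show ?thesis by blast
next
  case False
  then show ?thesis using assms unfolding is_structure_def by blast
qed

lemma Th_mem_iff_if_similar_card:
  fixes Sig :: "'s signature"
  assumes Sig: "at_most_constant Sig c"
    and structures: "is_structure Sig U F" "is_structure Sig U' F'"
    and \<phi>: "sentence Sig \<phi>" and sim: "similar_card (1 + quantifier_rank \<phi>) U U'"
  shows "\<phi> \<in> Th Sig U I F \<longleftrightarrow> \<phi> \<in> Th Sig U' I' F'"
proof -
  obtain a where a: "a \<in> U" "snd Sig c = Some 0 \<longrightarrow> F c [] = a"
    using constant_in_universe[OF structures(1)] by blast
  obtain a' where a': "a' \<in> U'" "snd Sig c = Some 0 \<longrightarrow> F' c [] = a'"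
    using constant_in_universe[OF structures(2)] by blast
  have "snd Sig c = Some 0 \<longrightarrow> F c [] = a \<and> F' c [] = a'" using a(2) a'(2) by blast
  then have sat_iff: "sat U I F v \<phi> \<longleftrightarrow> sat U' I' F' v' \<phi>" for v v'
    by (rule sat_iff_if_same_eq_type[where F = F and F' = F' and X = "{}", OF Sig _ a(1) a'(1)])
      (use \<phi> sim in \<open>simp_all add: sentence_def same_eq_type_def\<close>)
  have "\<phi> \<in> Th Sig U I F \<longleftrightarrow> sat U I F (\<lambda>_. a) \<phi>"
    unfolding Th_def using \<phi> a(1) sat_iff[of _ "\<lambda>_. a'"] by auto
  also have "\<dots> \<longleftrightarrow> \<phi> \<in> Th Sig U' I' F'"
    unfolding Th_def using \<phi> a'(1) sat_iff[of "\<lambda>_. a"] by auto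
  finally show ?thesis .
qed

lemma Th_eq_if_card_eq:
  fixes Sig :: "'s signature"
  assumes "at_most_constant Sig c" "is_structure Sig U F" "is_structure Sig U' F'"
    and "finite U" "finite U'" "card U = card U'"
  shows "Th Sig U I F = Th Sig U' I' F'"
proof (intro set_eqI)
  fix \<phi>
  show "\<phi> \<in> Th Sig U I F \<longleftrightarrow> \<phi> \<in> Th Sig U' I' F'"
  proof (cases "sentence Sig \<phi>")
    case True
    have "similar_card (1 + quantifier_rank \<phi>) U U'"
      using assms(4-6) unfolding similar_card_def by simp
    with assms(1-3) True show ?thesis by (rule Th_mem_iff_if_similar_card)
  qed (simp add: Th_def)
qed

definition small_theories :: "'s signature \<Rightarrow> nat \<Rightarrow> 's sym form set set" where
  "small_theories Sig k =
     {Th Sig U I F | (U :: ('s + nat) set) I F. is_structure Sig U F \<and> finite U \<and> card U < k}"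

lemma finite_small_theories:
  fixes Sig :: "'s signature"
  assumes Sig: "at_most_constant Sig c"
  shows "finite (small_theories Sig k)"
proof -
  let ?canonical = "\<lambda>m. Th Sig (Inr ` {..<m} :: ('s + nat) set) (\<lambda>_ _. False) (\<lambda>_ _. Inr 0)"
  have "small_theories Sig k \<subseteq> ?canonical ` {..<k}"
  proof
    fix T assume "T \<in> small_theories Sig k"
    then obtain U :: "('s + nat) set" and I F
      where U: "is_structure Sig U F" "finite U" "card U < k" and T: "T = Th Sig U I F"
      unfolding small_theories_def by blast
    let ?V = "Inr ` {..<card U} :: ('s + nat) set"
    have "card U > 0" using U(1,2) unfolding is_structure_def by (simp add: card_gt_0_iff)
    then have "is_structure Sig ?V (\<lambda>_ _. Inr 0)" by (intro is_structure_const) simp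
    moreover have "finite ?V" "card U = card ?V" by (simp_all add: card_image)
    ultimately have "T = ?canonical (card U)"
      unfolding T by (rule Th_eq_if_card_eq[OF Sig U(1) _ U(2)])
    with U(3) show "T \<in> ?canonical ` {..<k}" by blast
  qed
  then show ?thesis using finite_surj by blast
qed

lemma theories_with_subset_small_theories:
  fixes Sig :: "'s signature"
  assumes Sig: "at_most_constant Sig c" and \<phi>: "sentence Sig \<phi>"
    and fails_in_UNIV: "\<phi> \<notin> Th Sig (UNIV :: ('s + nat) set) (\<lambda>_ _. False) (\<lambda>_ _. Inr 0)"
  shows "theories_with (complete_theories Sig) \<phi> \<subseteq> small_theories Sig (1 + quantifier_rank \<phi>)"
proof
  fix T assume "T \<in> theories_with (complete_theories Sig) \<phi>"
  then obtain U :: "('s + nat) set" and I F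
    where U: "is_structure Sig U F" and T: "T = Th Sig U I F" "\<phi> \<in> T"
    unfolding theories_with_def complete_theories_def by blast
  show "T \<in> small_theories Sig (1 + quantifier_rank \<phi>)"
  proof (rule ccontr)
    assume "T \<notin> small_theories Sig (1 + quantifier_rank \<phi>)"
    then have "\<not> (finite U \<and> card U < 1 + quantifier_rank \<phi>)"
      using U T(1) unfolding small_theories_def by blast
    then have "similar_card (1 + quantifier_rank \<phi>) U (UNIV :: ('s + nat) set)"
      unfolding similar_card_def card_at_least_def by auto
    moreover have "is_structure Sig (UNIV :: ('s + nat) set) (\<lambda>_ _. Inr 0)"
      by (rule is_structure_const) simp
    ultimately have "\<phi> \<in> Th Sig (UNIV :: ('s + nat) set) (\<lambda>_ _. False) (\<lambda>_ _. Inr 0)"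
      using Th_mem_iff_if_similar_card[OF Sig U _ \<phi>] T by blast
    with fails_in_UNIV show False ..
  qed
qed

lemma e_minimal_if_at_most_constant:
  fixes Sig :: "'s signature"
  assumes Sig: "at_most_constant Sig c"
  shows "e_minimal Sig (complete_theories Sig)"
  unfolding e_minimal_def
proof (intro conjI allI impI infinite_complete_theories)
  fix \<phi> assume \<phi>: "sentence Sig \<phi>"
  then have Neg_\<phi>: "sentence Sig (Neg \<phi>)" unfolding sentence_def by simp
  let ?T_UNIV = "Th Sig (UNIV :: ('s + nat) set) (\<lambda>_ _. False) (\<lambda>_ _. Inr 0)"
  consider "\<phi> \<notin> ?T_UNIV" | "Neg \<phi> \<notin> ?T_UNIV" using Neg_notin_Th by blast
  then show "finite (theories_with (complete_theories Sig) \<phi>) \<or>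
      finite (theories_with (complete_theories Sig) (Neg \<phi>))"
  proof cases
    case 1
    then have "theories_with (complete_theories Sig) \<phi> \<subseteq> small_theories Sig (1 + quantifier_rank \<phi>)"
      by (rule theories_with_subset_small_theories[OF Sig \<phi>])
    then show ?thesis using finite_small_theories[OF Sig] finite_subset by blast
  next
    case 2
    then have "theories_with (complete_theories Sig) (Neg \<phi>) \<subseteq> small_theories Sig (1 + quantifier_rank \<phi>)"
      using theories_with_subset_small_theories[OF Sig Neg_\<phi>] by simp
    then show ?thesis using finite_small_theories[OF Sig] finite_subset by blast
  qed
qed

section \<open>All other signatures are not e-minimal\<close>

lemma not_e_minimal_if_models_of_both:
  fixes Sig :: "'s signature"
  assumes \<phi>: "sentence Sig \<phi>"
    and models: "\<And>m. m \<ge> 2 \<Longrightarrow> has_model_of_card Sig m \<phi>"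
    and models_Neg: "\<And>m. m \<ge> 2 \<Longrightarrow> has_model_of_card Sig m (Neg \<phi>)"
  shows "\<not> e_minimal Sig (complete_theories Sig)"
proof -
  have "infinite (theories_with (complete_theories Sig) \<psi>)"
    if "\<And>m. m \<ge> 2 \<Longrightarrow> has_model_of_card Sig m \<psi>" for \<psi>
  proof (rule infinite_theories_with)
    show "infinite {m. has_model_of_card Sig m \<psi>}"
      using that infinite_Ici[of 2] by (rule_tac infinite_super) auto
  qed
  then show ?thesis using \<phi> models models_Neg unfolding e_minimal_def by blast
qed

lemma not_e_minimal_if_relation:
  fixes Sig :: "'s signature"
  assumes r: "fst Sig r = Some n"
  shows "\<not> e_minimal Sig (complete_theories Sig)"
proof -
  let ?\<phi> = "Ex 0 (Pred (Rel r) (replicate n 0)) :: 's sym form"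
  have \<phi>: "sentence Sig ?\<phi>" using r unfolding sentence_def by (auto simp: set_replicate_conv_if)
  have "has_model_of_card Sig m ?\<phi>" if "m \<ge> 2" for m
    by (intro has_model_of_card_InrI[where F = "\<lambda>_ _. Inr 0" and I = "\<lambda>_ _. True"] is_structure_const)
      (use that \<phi> in \<open>auto simp: Th_def\<close>)
  moreover have "has_model_of_card Sig m (Neg ?\<phi>)" if "m \<ge> 2" for m
    by (intro has_model_of_card_InrI[where F = "\<lambda>_ _. Inr 0" and I = "\<lambda>_ _. False"] is_structure_const)
      (use that \<phi> in \<open>auto simp: Th_def sentence_def\<close>)
  ultimately show ?thesis by (rule not_e_minimal_if_models_of_both[OF \<phi>])
qed

lemma Suc_mod_neq: "2 \<le> m \<Longrightarrow> k < m \<Longrightarrow> Suc k mod m \<noteq> k"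
  by (cases "Suc k = m") auto

lemma not_e_minimal_if_function:
  fixes Sig :: "'s signature"
  assumes f: "snd Sig f = Some (Suc n)"
  shows "\<not> e_minimal Sig (complete_theories Sig)"
proof -
  let ?\<phi> = "Ex 0 (Pred (FunGraph f) (replicate (Suc n) 0 @ [0])) :: 's sym form"
  have \<phi>: "sentence Sig ?\<phi>" using f unfolding sentence_def by (auto simp: set_replicate_conv_if)
  have sat_\<phi>: "sat U I F v ?\<phi> \<longleftrightarrow> (\<exists>b\<in>U. F f (replicate (Suc n) b) = b)"
    for U :: "('s + nat) set" and I F v
    by simp
  have "has_model_of_card Sig m ?\<phi>" if "m \<ge> 2" for m
  proof (rule has_model_of_card_InrI[where F = "\<lambda>_ xs. if xs = [] then Inr 0 else hd xs"
        and I = "\<lambda>_ _. False"])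
    show "is_structure Sig (Inr ` {..<m}) (\<lambda>_ xs. if xs = [] then Inr 0 else hd xs)"
      using that unfolding is_structure_def by (auto simp: lessThan_empty_iff)
    show "?\<phi> \<in> Th Sig (Inr ` {..<m}) (\<lambda>_ _. False) (\<lambda>_ xs. if xs = [] then Inr 0 else hd xs)"
      using that \<phi> unfolding Th_def sat_\<phi> by auto
  qed
  moreover have "has_model_of_card Sig m (Neg ?\<phi>)" if "m \<ge> 2" for m
  proof (rule has_model_of_card_InrI[where F = "\<lambda>_ xs. if xs = [] then Inr 0
        else case_sum (\<lambda>_. Inr 0) (\<lambda>k. Inr (Suc k mod m)) (hd xs)" and I = "\<lambda>_ _. False"])
    show "is_structure Sig (Inr ` {..<m}) (\<lambda>_ xs. if xs = [] then Inr 0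
        else case_sum (\<lambda>_. Inr 0) (\<lambda>k. Inr (Suc k mod m)) (hd xs))"
      using that unfolding is_structure_def by (auto simp: lessThan_empty_iff split: sum.split)
    show "Neg ?\<phi> \<in> Th Sig (Inr ` {..<m}) (\<lambda>_ _. False) (\<lambda>_ xs. if xs = [] then Inr 0
        else case_sum (\<lambda>_. Inr 0) (\<lambda>k. Inr (Suc k mod m)) (hd xs))"
      using that \<phi> Suc_mod_neq unfolding Th_def sentence_def by (auto simp: sat_\<phi>)
  qed
  ultimately show ?thesis by (rule not_e_minimal_if_models_of_both[OF \<phi>])
qed

lemma not_e_minimal_if_two_constants:
  fixes Sig :: "'s signature"
  assumes "c \<noteq> d" and cd: "snd Sig c = Some 0" "snd Sig d = Some 0"
  shows "\<not> e_minimal Sig (complete_theories Sig)"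
proof -
  let ?\<phi> = "Ex 0 (Conj (Pred (FunGraph c) [0]) (Pred (FunGraph d) [0])) :: 's sym form"
  have \<phi>: "sentence Sig ?\<phi>" using cd unfolding sentence_def by auto
  have "has_model_of_card Sig m ?\<phi>" if "m \<ge> 2" for m
    by (intro has_model_of_card_InrI[where F = "\<lambda>_ _. Inr 0" and I = "\<lambda>_ _. False"] is_structure_const)
      (use that \<phi> in \<open>auto simp: Th_def\<close>)
  moreover have "has_model_of_card Sig m (Neg ?\<phi>)" if "m \<ge> 2" for m
  proof (rule has_model_of_card_InrI[where F = "\<lambda>g _. if g = c then Inr 0 else Inr 1"
        and I = "\<lambda>_ _. False"])
    show "is_structure Sig (Inr ` {..<m}) (\<lambda>g _. if g = c then Inr 0 else Inr 1)"
      using that unfolding is_structure_def by (auto simp: lessThan_empty_iff)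
    show "Neg ?\<phi> \<in> Th Sig (Inr ` {..<m}) (\<lambda>_ _. False) (\<lambda>g _. if g = c then Inr 0 else Inr 1)"
      using \<open>c \<noteq> d\<close> \<phi> unfolding Th_def sentence_def by auto
  qed
  ultimately show ?thesis by (rule not_e_minimal_if_models_of_both[OF \<phi>])
qed

lemma ex_at_most_constant_iff:
  "(\<exists>c. at_most_constant Sig c) \<longleftrightarrow> empty_signature Sig \<or> single_constant_signature Sig"
proof
  assume "\<exists>c. at_most_constant Sig c"
  then obtain c where no_relation: "fst Sig = (\<lambda>_. None)"
    and only_c: "\<And>f n. snd Sig f = Some n \<Longrightarrow> f = c \<and> n = 0"
    unfolding at_most_constant_def by blast
  have other: "snd Sig g = None" if "g \<noteq> c" for g
  proof (cases "snd Sig g")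
    case (Some n)
    with only_c[of g n] that show ?thesis by blast
  qed
  show "empty_signature Sig \<or> single_constant_signature Sig"
  proof (cases "snd Sig c")
    case None
    then have "snd Sig = (\<lambda>_. None)" using other by (intro ext) metis
    then show ?thesis using no_relation unfolding empty_signature_def by blast
  next
    case (Some n)
    with only_c[of c n] have "snd Sig c = Some 0" by blast
    then have "snd Sig = (\<lambda>_. None)(c := Some 0)" using other by (intro ext) simp
    then show ?thesis using no_relation unfolding single_constant_signature_def by blast
  qed
next
  assume "empty_signature Sig \<or> single_constant_signature Sig"
  then show "\<exists>c. at_most_constant Sig c"
  proof
    assume "empty_signature Sig"
    then have "at_most_constant Sig undefined"
      unfolding empty_signature_def at_most_constant_def by simp
    then show ?thesis ..
  next
    assume "single_constant_signature Sig"
    then obtain c where "fst Sig = (\<lambda>_. None)" "snd Sig = (\<lambda>_. None)(c := Some 0)"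
      unfolding single_constant_signature_def by blast
    then have "at_most_constant Sig c" unfolding at_most_constant_def by simp
    then show ?thesis ..
  qed
qed

lemma not_at_most_constantE:
  assumes "\<nexists>c. at_most_constant Sig c"
  obtains (relation_symbol) r n where "fst Sig r = Some n"
    | (function_symbol) f n where "snd Sig f = Some (Suc n)"
    | (two_constants) c d where "c \<noteq> d" "snd Sig c = Some 0" "snd Sig d = Some 0"
proof -
  obtain c where c: "snd Sig c = Some 0" if "\<exists>d. snd Sig d = Some 0" by blast
  have "\<not> at_most_constant Sig c" using assms by blast
  then consider r n where "fst Sig r = Some n" | f n where "snd Sig f = Some n" "f \<noteq> c \<or> n \<noteq> 0"
    unfolding at_most_constant_def by fastforce
  then show thesis
  proof cases
    case 1
    then show thesis by (rule relation_symbol)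
  next
    case (2 f n)
    show thesis
    proof (cases n)
      case 0
      with 2 c have "f \<noteq> c" "snd Sig f = Some 0" "snd Sig c = Some 0" by auto
      then show thesis by (rule two_constants)
    next
      case (Suc k)
      with 2 show thesis using function_symbol by blast
    qed
  qed
qed

theorem theorem2p1:
  fixes Sig :: "'s signature"
  shows "e_minimal Sig (complete_theories Sig) \<longleftrightarrow>
           empty_signature Sig \<or> single_constant_signature Sig"
proof
  assume e_min: "e_minimal Sig (complete_theories Sig)"
  have "\<exists>c. at_most_constant Sig c"
  proof (rule ccontr)
    assume "\<nexists>c. at_most_constant Sig c"
    then show False
    proof (cases rule: not_at_most_constantE)
      case relation_symbol
      show False using not_e_minimal_if_relation[OF relation_symbol] e_min by simp
    next
      case function_symbol
      show False using not_e_minimal_if_function[OF function_symbol] e_min by simp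
    next
      case two_constants
      show False using not_e_minimal_if_two_constants[OF two_constants] e_min by simp
    qed
  qed
  then show "empty_signature Sig \<or> single_constant_signature Sig"
    by (simp only: ex_at_most_constant_iff)
next
  assume "empty_signature Sig \<or> single_constant_signature Sig"
  then obtain c where "at_most_constant Sig c" by (simp only: ex_at_most_constant_iff[symmetric]) blast
  then show "e_minimal Sig (complete_theories Sig)" by (rule e_minimal_if_at_most_constant)
qed

end
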